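(* Let $p$ be a prime and $G_p=\mathbb{Z}_{p^{r_1}}^{k_1}\oplus\cdots\oplus\mathbb{Z}_{p^{r_n}}^{k_n}$ a finite abelian $p$-group with $r_1<\cdots<r_n$, $k_i\ge1$. If $g$ and $h$ are representative elements of $G_p$ that are automorphically equivalent (under an automorphism of $G_p$), then $g=h$. Consequently every element of $G_p$ is automorphically equivalent to a unique representative element of $G_p$.
   Context: Two elements are automorphically equivalent if some group automorphism maps one to the other. Elements of $\mathbb{Z}_{p^r}$ are identified with integers in $\{0,\dots,p^r-1\}$; a power of $p$ in $\mathbb{Z}_{p^r}$ means $p^s$ with $0\le s<r$. The repeat-free subgroup of $G_p$ is $G_p^{rf}=\mathbb{Z}_{p^{r_1}}\oplus\cdots\oplus\mathbb{Z}_{p^{r_n}}$, one copy of each distinct cyclic factor (direct summand of $G_p$). An element $g=(g_1,\dots,g_n)\in G_p^{rf}$ is a representative element of $G_p^{rf}$ if (1) every $g_i$ is $0$ or a power of $p$; (2) for all $i<j$ with $g_i,g_j$ nonzero, $g_i<g_j$; (3) for all $i<j$ with $g_i,g_j$ nonzero, the order of $g_i$ in $\mathbb{Z}_{p^{r_i}}$ is less than the order of $g_j$ in $\mathbb{Z}_{p^{r_j}}$. A representative element of $G_p$ is an element of $G_p^{rf}$ (all other coordinates $0$) which is a representative element of $G_p^{rf}$. *)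

theory Defs
  imports "HOL-Algebra.Group" "HOL-Computational_Algebra.Primes"
begin

text \<open>The finite abelian p-group
  G_p = Z_{p^{r_0}}^{k_0} + ... + Z_{p^{r_{n-1}}}^{k_{n-1}} (0-based indices).
  An element is a function x :: nat => nat => nat, where x i j is the j-th copy
  (j < k i) of the factor Z_{p^{r i}} (i < n), identified with a number in
  {0..<p^(r i)}; all coordinates outside the index range are 0.\<close>

definition Gp_carrier :: "nat \<Rightarrow> (nat \<Rightarrow> nat) \<Rightarrow> (nat \<Rightarrow> nat) \<Rightarrow> nat \<Rightarrow> (nat \<Rightarrow> nat \<Rightarrow> nat) set" where
  "Gp_carrier p r k n =
     {x. \<forall>i j. (i < n \<and> j < k i \<longrightarrow> x i j < p ^ r i) \<and>
               (\<not> (i < n \<and> j < k i) \<longrightarrow> x i j = 0)}"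

definition Gp :: "nat \<Rightarrow> (nat \<Rightarrow> nat) \<Rightarrow> (nat \<Rightarrow> nat) \<Rightarrow> nat \<Rightarrow> (nat \<Rightarrow> nat \<Rightarrow> nat) monoid" where
  "Gp p r k n =
     \<lparr> carrier = Gp_carrier p r k n,
       monoid.mult = (\<lambda>x y. \<lambda>i j. (x i j + y i j) mod p ^ r i),
       monoid.one = (\<lambda>i j. 0) \<rparr>"

definition cyc_order :: "nat \<Rightarrow> nat \<Rightarrow> nat" where
  "cyc_order m a = (LEAST d. 0 < d \<and> (d * a) mod m = 0)"

text \<open>Representative element: lies in the repeat-free subgroup (the first copy,
  j = 0, of each distinct cyclic factor; all other coordinates 0), and the
  coordinates g i 0 satisfy conditions (1)-(3).\<close>
definition is_representative :: "nat \<Rightarrow> (nat \<Rightarrow> nat) \<Rightarrow> (nat \<Rightarrow> nat) \<Rightarrow> nat \<Rightarrow> (nat \<Rightarrow> nat \<Rightarrow> nat) \<Rightarrow> bool" where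
  "is_representative p r k n g \<longleftrightarrow>
     g \<in> Gp_carrier p r k n \<and>
     (\<forall>i j. 0 < j \<longrightarrow> g i j = 0) \<and>
     (\<forall>i < n. g i 0 = 0 \<or> (\<exists>s < r i. g i 0 = p ^ s)) \<and>
     (\<forall>i j. i < j \<and> j < n \<and> g i 0 \<noteq> 0 \<and> g j 0 \<noteq> 0 \<longrightarrow>
        g i 0 < g j 0 \<and>
        cyc_order (p ^ r i) (g i 0) < cyc_order (p ^ r j) (g j 0))"

definition aut_equiv :: "nat \<Rightarrow> (nat \<Rightarrow> nat) \<Rightarrow> (nat \<Rightarrow> nat) \<Rightarrow> nat \<Rightarrow> (nat \<Rightarrow> nat \<Rightarrow> nat) \<Rightarrow> (nat \<Rightarrow> nat \<Rightarrow> nat) \<Rightarrow> bool" where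
  "aut_equiv p r k n g h \<longleftrightarrow>
     (\<exists>\<phi>. \<phi> \<in> iso (Gp p r k n) (Gp p r k n) \<and> \<phi> g = h)"

end

theory Submission
  imports Defs "HOL-Number_Theory.Cong"
begin

text \<open>
  For naturals \<open>a, b\<close> the subgroup \<open>p^a G_p + G_p[p^b]\<close> is characteristic, so
  membership in it is an automorphism invariant. For a representative \<open>g\<close>, membership fails
  exactly when some coordinate \<open>g_i = p^s\<close> has \<open>s < a\<close> and \<open>s + b < r_i\<close>. Recording each
  nonzero coordinate as the lattice point \<open>(s, r_i - s - 1)\<close> (the type of \<open>g\<close>), the invariants
  say which north-west quadrants the type meets. The defining conditions of a representative
  make its type a strictly increasing chain, and such sets are determined by the quadrants
  they meet; finally \<open>g\<close> is determined by its type since \<open>r\<close> is injective.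

  Scale every coordinate to a power of \<open>p\<close>, then repeatedly clear dominated
  coordinates by transvections and move coordinates into the first copy of their factor by
  swaps; a measure on the support decreases, and an irreducible element is a representative.
\<close>

lemma Gp_simps [simp]:
  "carrier (Gp p r k n) = Gp_carrier p r k n"
  "x \<otimes>\<^bsub>Gp p r k n\<^esub> y = (\<lambda>i j. (x i j + y i j) mod p ^ r i)"
  "\<one>\<^bsub>Gp p r k n\<^esub> = (\<lambda>i j. 0)"
  by (simp_all add: Gp_def)

lemma Gp_nat_pow: "x [^]\<^bsub>Gp p r k n\<^esub> (m::nat) = (\<lambda>i j. (m * x i j) mod p ^ r i)"
  by (induction m) (auto simp: mod_add_right_eq add.commute)

lemma Gp_carrier_iff:
  "x \<in> Gp_carrier p r k n \<longleftrightarrow>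
   (\<forall>i j. (i < n \<and> j < k i \<longrightarrow> x i j < p ^ r i) \<and> (\<not> (i < n \<and> j < k i) \<longrightarrow> x i j = 0))"
  by (simp add: Gp_carrier_def)

lemma Gp_carrier_nonzero:
  "x \<in> Gp_carrier p r k n \<Longrightarrow> x i j \<noteq> 0 \<Longrightarrow> i < n \<and> j < k i \<and> x i j < p ^ r i"
  by (metis Gp_carrier_iff)

lemma Gp_carrier_mod [simp]: "x \<in> Gp_carrier p r k n \<Longrightarrow> x i j mod p ^ r i = x i j"
  by (metis Gp_carrier_nonzero mod_0 mod_less)

lemma Gp_comm_group: "p > 0 \<Longrightarrow> comm_group (Gp p r k n)"
proof (rule comm_groupI, goal_cases)
  case (3 x y z) then show ?case by (auto simp: mod_add_left_eq mod_add_right_eq add.assoc)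
next
  case (4 x y) then show ?case by (auto simp: add.commute)
next
  case (6 x)
  let ?y = "\<lambda>i j. (p ^ r i - x i j) mod p ^ r i"
  have "x i j \<le> p ^ r i" for i j
    using 6 Gp_carrier_nonzero[of x p r k n i j] by (cases "x i j = 0") auto
  then have "?y \<otimes>\<^bsub>Gp p r k n\<^esub> x = \<one>\<^bsub>Gp p r k n\<^esub>"
    by (simp add: mod_add_left_eq)
  moreover have "?y \<in> carrier (Gp p r k n)" using 6 by (auto simp: Gp_carrier_iff)
  ultimately show ?case by blast
qed (auto simp: Gp_carrier_iff)

corollary Gp_group: "prime p \<Longrightarrow> group (Gp p r k n)"
  using Gp_comm_group prime_gt_0_nat comm_group.axioms(2) by blast

lemma Gp_carrier_prime_power:
  assumes "prime p" and "x \<in> Gp_carrier p r k n" and "x i j = p ^ s"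
  shows "s < r i \<and> i < n \<and> j < k i"
proof -
  have p1: "p > 1" using assms(1) prime_gt_1_nat by blast
  then have "x i j \<noteq> 0" using assms(3) by simp
  then have bounds: "i < n \<and> j < k i \<and> p ^ s < p ^ r i"
    using Gp_carrier_nonzero[OF assms(2)] assms(3) by metis
  then have "s < r i" using p1 power_less_imp_less_exp by blast
  with bounds show ?thesis by blast
qed

lemma cyc_order_prime_power:
  assumes "prime p" and "s \<le> r"
  shows "cyc_order (p ^ r) (p ^ s) = p ^ (r - s)"
  unfolding cyc_order_def
proof (rule Least_equality)
  have p1: "p > 1" using assms(1) prime_gt_1_nat by blast
  show "0 < p ^ (r - s) \<and> p ^ (r - s) * p ^ s mod p ^ r = 0"
    using p1 assms(2) by (simp flip: power_add)
  fix d assume d: "0 < d \<and> d * p ^ s mod p ^ r = 0"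
  then have "p ^ s * p ^ (r - s) dvd p ^ s * d" using assms(2)
    by (simp flip: power_add add: mod_eq_0_iff_dvd mult.commute)
  then have "p ^ (r - s) dvd d" using p1 by (subst (asm) nat_mult_dvd_cancel1) auto
  then show "p ^ (r - s) \<le> d" using d by (simp add: dvd_imp_le)
qed

lemma aut_equivI: "\<phi> \<in> iso (Gp p r k n) (Gp p r k n) \<Longrightarrow> aut_equiv p r k n x (\<phi> x)"
  unfolding aut_equiv_def by blast

lemma aut_equiv_trans:
  "aut_equiv p r k n x y \<Longrightarrow> aut_equiv p r k n y z \<Longrightarrow> aut_equiv p r k n x z"
  unfolding aut_equiv_def by (metis comp_apply iso_set_trans)

lemma aut_equiv_sym:
  assumes "prime p" and "aut_equiv p r k n x y" and "x \<in> Gp_carrier p r k n"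
  shows "aut_equiv p r k n y x"
proof -
  obtain \<phi> where \<phi>: "\<phi> \<in> iso (Gp p r k n) (Gp p r k n)" "\<phi> x = y"
    using assms(2) unfolding aut_equiv_def by blast
  have "inv_into (carrier (Gp p r k n)) \<phi> \<in> iso (Gp p r k n) (Gp p r k n)"
    by (rule group.iso_set_sym[OF Gp_group[OF assms(1)] \<phi>(1)])
  moreover have "inv_into (carrier (Gp p r k n)) \<phi> y = x"
    unfolding \<phi>(2)[symmetric] by (rule inv_into_f_f) (use \<phi>(1) assms(3) in \<open>auto simp: iso_iff\<close>)
  ultimately show ?thesis unfolding aut_equiv_def by blast
qed

section \<open>An automorphism invariant\<close>

text \<open>\<open>in_pow_torsion G m e x\<close> says that \<open>x \<in> G^m \<cdot> G[e]\<close>, i.e. \<open>x\<close> is an \<open>m\<close>-th power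
  times an element killed by \<open>e\<close>. Both factors are characteristic, so the property is
  preserved by homomorphisms and hence invariant under isomorphisms.\<close>
definition in_pow_torsion :: "('a, 'b) monoid_scheme \<Rightarrow> nat \<Rightarrow> nat \<Rightarrow> 'a \<Rightarrow> bool" where
  "in_pow_torsion G m e x \<longleftrightarrow> (\<exists>y\<in>carrier G. \<exists>z\<in>carrier G.
      x = y [^]\<^bsub>G\<^esub> m \<otimes>\<^bsub>G\<^esub> z \<and> z [^]\<^bsub>G\<^esub> e = \<one>\<^bsub>G\<^esub>)"

lemma in_pow_torsion_hom:
  assumes "group G" "group H" "\<phi> \<in> hom G H" "x \<in> carrier G" "in_pow_torsion G m e x"
  shows "in_pow_torsion H m e (\<phi> x)"
proof -
  interpret group_hom G H \<phi>
    using assms(1-3) unfolding group_hom_def group_hom_axioms_def by blast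
  obtain y z where yz: "y \<in> carrier G" "z \<in> carrier G"
     "x = y [^]\<^bsub>G\<^esub> m \<otimes>\<^bsub>G\<^esub> z" "z [^]\<^bsub>G\<^esub> e = \<one>\<^bsub>G\<^esub>"
    using assms(5) unfolding in_pow_torsion_def by blast
  have "\<phi> x = \<phi> y [^]\<^bsub>H\<^esub> m \<otimes>\<^bsub>H\<^esub> \<phi> z"
    using yz(1-3) by (simp add: hom_nat_pow)
  moreover have "\<phi> z [^]\<^bsub>H\<^esub> e = \<one>\<^bsub>H\<^esub>"
    using yz(2,4) hom_nat_pow[of z e] by simp
  moreover have "\<phi> y \<in> carrier H" "\<phi> z \<in> carrier H" using yz by auto
  ultimately show ?thesis unfolding in_pow_torsion_def by blast
qed

lemma in_pow_torsion_iso: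
  assumes G: "group G" and H: "group H" and \<phi>: "\<phi> \<in> iso G H" and x: "x \<in> carrier G"
  shows "in_pow_torsion H m e (\<phi> x) \<longleftrightarrow> in_pow_torsion G m e x"
proof
  show "in_pow_torsion G m e x \<Longrightarrow> in_pow_torsion H m e (\<phi> x)"
    by (rule in_pow_torsion_hom[OF G H iso_imp_homomorphism[OF \<phi>] x])
  let ?\<psi> = "inv_into (carrier G) \<phi>"
  assume "in_pow_torsion H m e (\<phi> x)"
  moreover have "?\<psi> \<in> iso H G" by (rule group.iso_set_sym[OF G \<phi>])
  moreover have "\<phi> x \<in> carrier H" using \<phi> x by (auto simp: iso_iff)
  ultimately have "in_pow_torsion G m e (?\<psi> (\<phi> x))"
    using in_pow_torsion_hom[OF H G iso_imp_homomorphism] by blast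
  moreover have "?\<psi> (\<phi> x) = x"
    by (rule inv_into_f_f) (use \<phi> x in \<open>auto simp: iso_iff\<close>)
  ultimately show "in_pow_torsion G m e x" by simp
qed

corollary aut_equiv_in_pow_torsion:
  assumes p: "prime p" and "aut_equiv p r k n x y" and x: "x \<in> Gp_carrier p r k n"
  shows "in_pow_torsion (Gp p r k n) m e x \<longleftrightarrow> in_pow_torsion (Gp p r k n) m e y"
proof -
  obtain \<phi> where \<phi>: "\<phi> \<in> iso (Gp p r k n) (Gp p r k n)" "\<phi> x = y"
    using assms(2) unfolding aut_equiv_def by blast
  show ?thesis
    using in_pow_torsion_iso[OF Gp_group[OF p] Gp_group[OF p] \<phi>(1), of x] x \<phi>(2) by simp
qed

text \<open>Given \<open>x \<in> T\<close>, the quadrant of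
  \<open>x\<close> contains some \<open>y \<in> U\<close>, whose quadrant contains some \<open>z \<in> T\<close>; then \<open>z\<close> is weakly
  north-west of \<open>x\<close>, forcing \<open>z = x\<close> and hence \<open>y = x\<close>.\<close>
lemma nw_free_eq_by_quadrants:
  fixes T U :: "(nat \<times> nat) set"
  assumes nwT: "\<And>x y. x \<in> T \<Longrightarrow> y \<in> T \<Longrightarrow> fst x \<le> fst y \<Longrightarrow> snd y \<le> snd x \<Longrightarrow> x = y"
    and nwU: "\<And>x y. x \<in> U \<Longrightarrow> y \<in> U \<Longrightarrow> fst x \<le> fst y \<Longrightarrow> snd y \<le> snd x \<Longrightarrow> x = y"
    and quad: "\<And>a b. (\<exists>(s, t) \<in> T. s \<le> a \<and> b \<le> t) \<longleftrightarrow> (\<exists>(s, t) \<in> U. s \<le> a \<and> b \<le> t)"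
  shows "T = U"
proof -
  have sub: "T \<subseteq> U"
    if nw: "\<And>x y. x \<in> T \<Longrightarrow> y \<in> T \<Longrightarrow> fst x \<le> fst y \<Longrightarrow> snd y \<le> snd x \<Longrightarrow> x = y"
      and q: "\<And>a b. (\<exists>(s, t) \<in> T. s \<le> a \<and> b \<le> t) \<longleftrightarrow> (\<exists>(s, t) \<in> U. s \<le> a \<and> b \<le> t)"
    for T U :: "(nat \<times> nat) set"
  proof
    fix x assume x: "x \<in> T"
    obtain y where y: "y \<in> U" "fst y \<le> fst x" "snd x \<le> snd y"
      using q[of "fst x" "snd x"] x by force
    obtain z where z: "z \<in> T" "fst z \<le> fst y" "snd y \<le> snd z"
      using q[of "fst y" "snd y"] y(1) by force
    have "z = x" using nw[OF z(1) x] y z by linarith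
    then have "y = x" using y z by (simp add: prod_eq_iff)
    then show "x \<in> U" using y(1) by simp
  qed
  show ?thesis using sub[OF nwT quad] sub[OF nwU quad[symmetric]] by blast
qed

section \<open>Uniqueness of representatives\<close>

text \<open>A coordinate \<open>p^s\<close> of \<open>\<int>_{p^r}\<close> with \<open>s < a\<close> and \<open>s + b < r\<close> is an obstruction to
  \<open>x \<in> p^a G_p + G_p[p^b]\<close>: every element of that subgroup has this coordinate divisible
  by \<open>p^(s+1)\<close>.\<close>
lemma not_in_pow_torsion:
  assumes p: "prime p" and x: "x \<in> Gp_carrier p r k n" and xij: "x i j = p ^ s"
    and sa: "s < a" and sb: "s + b < r i"
  shows "\<not> in_pow_torsion (Gp p r k n) (p ^ a) (p ^ b) x"
proof
  assume "in_pow_torsion (Gp p r k n) (p ^ a) (p ^ b) x"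
  then obtain y z where
    decomp: "x = (\<lambda>i j. (p ^ a * y i j mod p ^ r i + z i j) mod p ^ r i)" and
    tors: "(\<lambda>i j. p ^ b * z i j mod p ^ r i) = (\<lambda>i j. 0)"
    unfolding in_pow_torsion_def by (auto simp: Gp_nat_pow)
  have p1: "p > 1" using p prime_gt_1_nat by blast
  have "p ^ r i dvd p ^ b * z i j"
    using fun_cong[OF fun_cong[OF tors, of i], of j] by (simp add: mod_eq_0_iff_dvd)
  moreover have "p ^ (b + Suc s) dvd p ^ r i" by (rule le_imp_power_dvd) (use sb in simp)
  ultimately have "p ^ b * p ^ Suc s dvd p ^ b * z i j"
    by (metis dvd_trans power_add)
  then have z_dvd: "p ^ Suc s dvd z i j" using p1 by (subst (asm) nat_mult_dvd_cancel1) auto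
  have y_dvd: "p ^ Suc s dvd p ^ a * y i j"
    by (rule dvd_mult2, rule le_imp_power_dvd) (use sa in simp)
  have M_dvd: "p ^ Suc s dvd p ^ r i" by (rule le_imp_power_dvd) (use sb in simp)
  have "p ^ Suc s dvd (p ^ a * y i j mod p ^ r i + z i j) mod p ^ r i"
    by (intro dvd_mod dvd_add M_dvd y_dvd z_dvd)
  then have "p ^ Suc s dvd p ^ s" using decomp xij by metis
  then show False using p1 power_dvd_imp_le by fastforce
qed

lemma rep_carrier: "is_representative p r k n g \<Longrightarrow> g \<in> Gp_carrier p r k n"
  by (simp add: is_representative_def)

lemma rep_off_column: "is_representative p r k n g \<Longrightarrow> 0 < j \<Longrightarrow> g i j = 0"
  by (simp add: is_representative_def)

lemma rep_prime_power:
  "is_representative p r k n g \<Longrightarrow> g i 0 \<noteq> 0 \<Longrightarrow> \<exists>s. g i 0 = p ^ s"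
  unfolding is_representative_def by (metis Gp_carrier_nonzero)

text \<open>Conversely, for a representative the obstructions above are the only ones: split
  each coordinate into the part divisible by \<open>p^a\<close> and the rest, which is killed by \<open>p^b\<close>.\<close>
lemma rep_in_pow_torsion:
  assumes p: "prime p" and g: "is_representative p r k n g"
    and large: "\<And>i s. i < n \<Longrightarrow> g i 0 = p ^ s \<Longrightarrow> a \<le> s \<or> r i \<le> s + b"
  shows "in_pow_torsion (Gp p r k n) (p ^ a) (p ^ b) g"
proof -
  have p1: "p > 1" using p prime_gt_1_nat by blast
  have gc: "g \<in> Gp_carrier p r k n" using g rep_carrier by blast
  define y where "y = (\<lambda>i j. if p ^ a dvd g i j then g i j div p ^ a else 0)"
  define z where "z = (\<lambda>i j. if p ^ a dvd g i j then 0 else g i j)"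
  have yc: "y \<in> Gp_carrier p r k n" and zc: "z \<in> Gp_carrier p r k n"
    using gc p1 unfolding Gp_carrier_iff y_def z_def
    by (auto intro: le_less_trans[OF div_le_dividend])
  have "g = (\<lambda>i j. (p ^ a * y i j mod p ^ r i + z i j) mod p ^ r i)"
    using gc unfolding y_def z_def by (intro ext) auto
  moreover have "(\<lambda>i j. p ^ b * z i j mod p ^ r i) = (\<lambda>i j. 0)"
  proof (intro ext)
    fix i j
    show "p ^ b * z i j mod p ^ r i = 0"
    proof (cases "z i j = 0")
      case False
      then have nd: "\<not> p ^ a dvd g i j" and zg: "z i j = g i j" unfolding z_def by (auto split: if_splits)
      then have "g i j \<noteq> 0" by (metis dvd_0_right)
      then obtain s where s: "g i j = p ^ s" and j: "j = 0"
        using rep_prime_power[OF g] rep_off_column[OF g] by (metis gr0I)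
      have "i < n" using Gp_carrier_prime_power[OF p gc s] by blast
      moreover have "\<not> a \<le> s" using nd s le_imp_power_dvd by metis
      ultimately have "r i \<le> b + s" using large s j by force
      then have "p ^ r i dvd p ^ b * p ^ s" by (simp add: le_imp_power_dvd flip: power_add)
      then show ?thesis using zg s by simp
    qed simp
  qed
  ultimately show ?thesis
    unfolding in_pow_torsion_def Gp_nat_pow Gp_simps using yc zc by blast
qed

lemma rep_order:
  assumes p: "prime p" and g: "is_representative p r k n g" and ij: "i < j" "j < n"
    and gi: "g i 0 = p ^ s" and gj: "g j 0 = p ^ t"
  shows "s < t \<and> r i - s < r j - t"
proof -
  have p1: "p > 1" using p prime_gt_1_nat by blast
  have sr: "s < r i" and tr: "t < r j"
    using Gp_carrier_prime_power[OF p rep_carrier[OF g]] gi gj by blast+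
  have "g i 0 \<noteq> 0" "g j 0 \<noteq> 0" using gi gj p1 by simp_all
  then have "g i 0 < g j 0 \<and> cyc_order (p ^ r i) (g i 0) < cyc_order (p ^ r j) (g j 0)"
    using g ij unfolding is_representative_def by blast
  then have "p ^ s < p ^ t \<and> p ^ (r i - s) < p ^ (r j - t)"
    using gi gj cyc_order_prime_power[OF p] sr tr by simp
  then show ?thesis using p1 power_less_imp_less_exp by blast
qed

text \<open>The type of an element records, for every factor index \<open>i\<close> whose first coordinate is
  \<open>p^s\<close>, the point \<open>(s, r_i - s - 1)\<close>: the exponent and the logarithm of the order minus one.\<close>
definition rep_type :: "nat \<Rightarrow> (nat \<Rightarrow> nat) \<Rightarrow> nat \<Rightarrow> (nat \<Rightarrow> nat \<Rightarrow> nat) \<Rightarrow> (nat \<times> nat) set" where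
  "rep_type p r n g = {(s, r i - Suc s) | i s. i < n \<and> g i 0 = p ^ s}"

text \<open>The type of a representative meets the quadrant \<open>{s \<le> a, b \<le> t}\<close> exactly when the
  representative is not in \<open>p^(a+1) G_p + G_p[p^b]\<close>; so the quadrants met are an
  automorphism invariant.\<close>
lemma rep_type_quadrant:
  assumes p: "prime p" and g: "is_representative p r k n g"
  shows "(\<exists>(s, t) \<in> rep_type p r n g. s \<le> a \<and> b \<le> t) \<longleftrightarrow>
         \<not> in_pow_torsion (Gp p r k n) (p ^ Suc a) (p ^ b) g"
proof
  assume "\<exists>(s, t) \<in> rep_type p r n g. s \<le> a \<and> b \<le> t"
  then obtain i s where "i < n" "g i 0 = p ^ s" "s \<le> a" "b \<le> r i - Suc s"
    unfolding rep_type_def by blast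
  moreover have "s < r i"
    using Gp_carrier_prime_power[OF p rep_carrier[OF g] \<open>g i 0 = p ^ s\<close>] by blast
  ultimately have "g i 0 = p ^ s" "s < Suc a" "s + b < r i" by linarith+
  then show "\<not> in_pow_torsion (Gp p r k n) (p ^ Suc a) (p ^ b) g"
    using not_in_pow_torsion[OF p rep_carrier[OF g]] by blast
next
  assume "\<not> in_pow_torsion (Gp p r k n) (p ^ Suc a) (p ^ b) g"
  then obtain i s where "i < n" "g i 0 = p ^ s" "s \<le> a" "s + b < r i"
    using rep_in_pow_torsion[OF p g] by (meson not_less_eq_eq not_le)
  then show "\<exists>(s, t) \<in> rep_type p r n g. s \<le> a \<and> b \<le> t"
    unfolding rep_type_def by force
qed

text \<open>By \<open>rep_order\<close>, distinct points of a representative's type increase strictly in both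
  coordinates, so no point lies weakly north-west of another.\<close>
lemma rep_type_nw_free:
  assumes p: "prime p" and g: "is_representative p r k n g"
    and x: "x \<in> rep_type p r n g" and y: "y \<in> rep_type p r n g"
    and nw: "fst x \<le> fst y" "snd y \<le> snd x"
  shows "x = y"
proof -
  obtain i s where i: "i < n" "g i 0 = p ^ s" "x = (s, r i - Suc s)"
    using x unfolding rep_type_def by blast
  obtain j t where j: "j < n" "g j 0 = p ^ t" "y = (t, r j - Suc t)"
    using y unfolding rep_type_def by blast
  have "s < r i" "t < r j"
    using Gp_carrier_prime_power[OF p rep_carrier[OF g]] i j by blast+
  then consider "i = j" | "i < j" | "j < i" using nw i(3) j(3) by linarith
  then show ?thesis
  proof cases
    case 1 then show ?thesis using i j p prime_gt_1_nat by simp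
  next
    case 2 then show ?thesis using rep_order[OF p g 2 j(1) i(2) j(2)] nw i(3) j(3) \<open>s < r i\<close> by auto
  next
    case 3 then show ?thesis using rep_order[OF p g 3 i(1) j(2) i(2)] nw i(3) j(3) by auto
  qed
qed

text \<open>A representative is recovered from its type, because the factor index \<open>i\<close> of a point
  \<open>(s, t)\<close> is determined by \<open>r_i = s + t + 1\<close> and \<open>r\<close> is strictly increasing.\<close>
lemma rep_coord_from_type:
  assumes p: "prime p" and incr: "\<And>i j. i < j \<Longrightarrow> j < n \<Longrightarrow> r i < r j"
    and g: "is_representative p r k n g" and h: "is_representative p r k n h"
    and sub: "rep_type p r n g \<subseteq> rep_type p r n h" and gi: "g i 0 = p ^ s"
  shows "h i 0 = p ^ s"
proof -
  have i: "i < n" "s < r i" using Gp_carrier_prime_power[OF p rep_carrier[OF g] gi] by auto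
  then have "(s, r i - Suc s) \<in> rep_type p r n h"
    using sub gi unfolding rep_type_def by blast
  then obtain i' where i': "i' < n" "h i' 0 = p ^ s" "r i' - Suc s = r i - Suc s"
    unfolding rep_type_def using p prime_gt_1_nat power_inject_exp by fastforce
  have "s < r i'" using Gp_carrier_prime_power[OF p rep_carrier[OF h] i'(2)] by blast
  then have "r i' = r i" using i'(3) i(2) by linarith
  then have "i' = i" using incr i(1) i'(1) by (metis less_irrefl nat_neq_iff)
  then show ?thesis using i'(2) by simp
qed

lemma rep_eq_by_type:
  assumes p: "prime p" and incr: "\<And>i j. i < j \<Longrightarrow> j < n \<Longrightarrow> r i < r j"
    and g: "is_representative p r k n g" and h: "is_representative p r k n h"
    and same_type: "rep_type p r n g = rep_type p r n h"
  shows "g = h"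
proof (intro ext)
  fix i j
  show "g i j = h i j"
  proof (cases "0 < j")
    case True then show ?thesis using rep_off_column g h by metis
  next
    case False
    then have j: "j = 0" by simp
    show ?thesis
    proof (cases "g i 0 = 0 \<and> h i 0 = 0")
      case False
      then obtain s where "g i 0 = p ^ s \<or> h i 0 = p ^ s"
        using rep_prime_power[OF g] rep_prime_power[OF h] by blast
      then show ?thesis
        using rep_coord_from_type[of p n r k g h] rep_coord_from_type[of p n r k h g]
          p incr g h same_type j by (metis order_refl)
    qed (use j in simp)
  qed
qed

text \<open>Uniqueness: automorphically equivalent representatives meet the same quadrants, hence
  have the same type, hence coincide.\<close>
theorem rep_unique:
  assumes p: "prime p" and incr: "\<And>i j. i < j \<Longrightarrow> j < n \<Longrightarrow> r i < r j"
    and g: "is_representative p r k n g" and h: "is_representative p r k n h"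
    and equiv: "aut_equiv p r k n g h"
  shows "g = h"
proof -
  have "(\<exists>(s, t) \<in> rep_type p r n g. s \<le> a \<and> b \<le> t) \<longleftrightarrow>
        (\<exists>(s, t) \<in> rep_type p r n h. s \<le> a \<and> b \<le> t)" for a b
    using rep_type_quadrant[OF p g] rep_type_quadrant[OF p h]
      aut_equiv_in_pow_torsion[OF p equiv rep_carrier[OF g]] by blast
  then have "rep_type p r n g = rep_type p r n h"
    using nw_free_eq_by_quadrants rep_type_nw_free[OF p g] rep_type_nw_free[OF p h] by blast
  then show ?thesis using rep_eq_by_type[of p n r k g h] p incr g h by blast
qed

section \<open>Elementary automorphisms\<close>

lemma iso_by_inverse:
  assumes "\<And>x. x \<in> carrier G \<Longrightarrow> f x \<in> carrier H"
    and "\<And>x y. x \<in> carrier G \<Longrightarrow> y \<in> carrier G \<Longrightarrow> f (x \<otimes>\<^bsub>G\<^esub> y) = f x \<otimes>\<^bsub>H\<^esub> f y"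
    and "\<And>y. y \<in> carrier H \<Longrightarrow> g y \<in> carrier G"
    and "\<And>x. x \<in> carrier G \<Longrightarrow> g (f x) = x"
    and "\<And>y. y \<in> carrier H \<Longrightarrow> f (g y) = y"
  shows "f \<in> iso G H"
proof (rule isoI)
  show "f \<in> hom G H" using assms by (auto simp: hom_def)
  show "bij_betw f (carrier G) (carrier H)"
    by (rule bij_betw_byWitness[of _ g]) (use assms in auto)
qed

definition scale :: "nat \<Rightarrow> (nat \<Rightarrow> nat) \<Rightarrow> (nat \<Rightarrow> nat \<Rightarrow> nat) \<Rightarrow> (nat \<Rightarrow> nat \<Rightarrow> nat) \<Rightarrow> nat \<Rightarrow> nat \<Rightarrow> nat" where
  "scale p r w x = (\<lambda>i j. (w i j * x i j) mod p ^ r i)"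

lemma scale_carrier: "prime p \<Longrightarrow> x \<in> Gp_carrier p r k n \<Longrightarrow> scale p r w x \<in> Gp_carrier p r k n"
  unfolding scale_def Gp_carrier_iff by (auto simp: prime_gt_0_nat)

lemma scale_scale:
  assumes x: "x \<in> Gp_carrier p r k n" and inv: "\<And>i j. [u i j * w i j = 1] (mod p ^ r i)"
  shows "scale p r u (scale p r w x) = x"
proof (intro ext)
  fix i j
  have "(u i j * ((w i j * x i j) mod p ^ r i)) mod p ^ r i = (u i j * w i j * x i j) mod p ^ r i"
    by (simp add: mod_mult_right_eq mult.assoc)
  also have "\<dots> = (1 * x i j) mod p ^ r i"
    using inv[of i j] unfolding cong_def by (metis mod_mult_left_eq)
  also have "\<dots> = x i j" using x by simp
  finally show "scale p r u (scale p r w x) i j = x i j" unfolding scale_def .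
qed

lemma scale_iso:
  assumes p: "prime p" and unit: "\<And>i j. coprime (w i j) p"
  shows "scale p r w \<in> iso (Gp p r k n) (Gp p r k n)"
proof -
  define u where "u i j = (SOME u. [w i j * u = 1] (mod p ^ r i))" for i j
  have "\<exists>u. [w i j * u = 1] (mod p ^ r i)" for i j
    using unit[of i j] coprime_iff_invertible_nat[of "w i j" "p ^ r i"] by simp
  then have wu: "[w i j * u i j = 1] (mod p ^ r i)" for i j
    unfolding u_def by (rule someI_ex)
  then have uw: "[u i j * w i j = 1] (mod p ^ r i)" for i j
    by (simp add: mult.commute)
  show ?thesis
  proof (rule iso_by_inverse[where g = "scale p r u"])
    fix x y assume "x \<in> carrier (Gp p r k n)" "y \<in> carrier (Gp p r k n)"
    show "scale p r w (x \<otimes>\<^bsub>Gp p r k n\<^esub> y) = scale p r w x \<otimes>\<^bsub>Gp p r k n\<^esub> scale p r w y"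
      unfolding Gp_simps scale_def by (intro ext) (simp add: mod_mult_right_eq mod_add_eq distrib_left)
  qed (use scale_carrier[OF p] scale_scale[OF _ uw] scale_scale[OF _ wu] in auto)
qed

text \<open>Multiplication by \<open>c\<close> induces a homomorphism \<open>\<int>_{M'} \<rightarrow> \<int>_M\<close> when \<open>M\<close> divides \<open>c M'\<close>.\<close>
lemma mult_mod_absorb:
  fixes M M' c t :: nat
  assumes "M dvd c * M'"
  shows "(c * (t mod M')) mod M = (c * t) mod M"
proof -
  obtain q where q: "c * M' = M * q" using assms by blast
  have "c * t = c * (t mod M') + c * M' * (t div M')"
    by (metis div_mult_mod_eq add.commute distrib_left mult.assoc mult.commute)
  also have "\<dots> = c * (t mod M') + M * (q * (t div M'))" by (simp add: q mult.assoc)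
  finally show ?thesis by simp
qed

text \<open>Adding \<open>c\<close> times coordinate \<open>(a', b')\<close> to coordinate \<open>(a, b)\<close> is an automorphism
  provided multiplication by \<open>c\<close> is a homomorphism \<open>\<int>_{p^r_a'} \<rightarrow> \<int>_{p^r_a}\<close>; its inverse
  is the transvection with \<open>c (p^r_a - 1)\<close>.\<close>
definition transvection ::
    "nat \<Rightarrow> (nat \<Rightarrow> nat) \<Rightarrow> nat \<Rightarrow> nat \<Rightarrow> nat \<Rightarrow> nat \<Rightarrow> nat \<Rightarrow> (nat \<Rightarrow> nat \<Rightarrow> nat) \<Rightarrow> nat \<Rightarrow> nat \<Rightarrow> nat" where
  "transvection p r a b a' b' c x =
     (\<lambda>i j. if i = a \<and> j = b then (x a b + c * x a' b') mod p ^ r a else x i j)"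

lemma transvection_carrier:
  assumes "prime p" "a < n" "b < k a" "x \<in> Gp_carrier p r k n"
  shows "transvection p r a b a' b' c x \<in> Gp_carrier p r k n"
  using assms unfolding transvection_def Gp_carrier_iff by (auto simp: prime_gt_0_nat)

lemma transvection_transvection:
  assumes x: "x \<in> Gp_carrier p r k n" and ne: "(a, b) \<noteq> (a', b')"
    and c: "(c1 + c2) mod p ^ r a = 0"
  shows "transvection p r a b a' b' c2 (transvection p r a b a' b' c1 x) = x"
proof -
  have "((x a b + c1 * x a' b') mod p ^ r a + c2 * x a' b') mod p ^ r a
      = (x a b + (c1 + c2) * x a' b') mod p ^ r a"
    by (simp add: mod_add_left_eq distrib_right add.assoc)
  also have "\<dots> = (x a b + ((c1 + c2) mod p ^ r a) * x a' b') mod p ^ r a"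
    by (metis mod_add_right_eq mod_mult_left_eq)
  also have "\<dots> = x a b" using c x by simp
  finally show ?thesis using ne unfolding transvection_def by (intro ext) auto
qed

lemma transvection_iso:
  assumes p: "prime p" and ne: "(a, b) \<noteq> (a', b')" and ab: "a < n" "b < k a"
    and dvd: "p ^ r a dvd c * p ^ r a'"
  shows "transvection p r a b a' b' c \<in> iso (Gp p r k n) (Gp p r k n)"
proof (rule iso_by_inverse[where g = "transvection p r a b a' b' (c * (p ^ r a - 1))"])
  let ?M = "p ^ r a"
  obtain M' where "?M = Suc M'" using p by (metis gr0_implies_Suc prime_gt_0_nat zero_less_power)
  then have "c + c * (?M - 1) = c * ?M" by simp
  then have "(c + c * (?M - 1)) mod ?M = 0" "(c * (?M - 1) + c) mod ?M = 0"
    by (simp_all add: add.commute)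
  then show "\<And>x. x \<in> carrier (Gp p r k n) \<Longrightarrow>
      transvection p r a b a' b' (c * (?M - 1)) (transvection p r a b a' b' c x) = x"
    "\<And>x. x \<in> carrier (Gp p r k n) \<Longrightarrow>
      transvection p r a b a' b' c (transvection p r a b a' b' (c * (?M - 1)) x) = x"
    using transvection_transvection[OF _ ne] by simp_all
  fix x y assume "x \<in> carrier (Gp p r k n)" "y \<in> carrier (Gp p r k n)"
  have "((x a b + y a b) mod ?M + c * ((x a' b' + y a' b') mod p ^ r a')) mod ?M
      = ((x a b + y a b) + c * (x a' b' + y a' b')) mod ?M"
    using mult_mod_absorb[OF dvd] by (metis mod_add_eq mod_mod_trivial)
  also have "\<dots> = ((x a b + c * x a' b') mod ?M + (y a b + c * y a' b') mod ?M) mod ?M"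
    by (simp add: mod_add_eq algebra_simps)
  finally show "transvection p r a b a' b' c (x \<otimes>\<^bsub>Gp p r k n\<^esub> y) =
      transvection p r a b a' b' c x \<otimes>\<^bsub>Gp p r k n\<^esub> transvection p r a b a' b' c y"
    unfolding Gp_simps transvection_def by (intro ext) auto
qed (use transvection_carrier[where k = k, OF p ab] in auto)

definition swap_coords :: "nat \<Rightarrow> nat \<Rightarrow> nat \<Rightarrow> (nat \<Rightarrow> nat \<Rightarrow> nat) \<Rightarrow> nat \<Rightarrow> nat \<Rightarrow> nat" where
  "swap_coords a b b' x =
     (\<lambda>i j. if i = a \<and> j = b then x a b' else if i = a \<and> j = b' then x a b else x i j)"

lemma swap_coords_carrier:
  assumes "a < n" "b < k a" "b' < k a" "x \<in> Gp_carrier p r k n"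
  shows "swap_coords a b b' x \<in> Gp_carrier p r k n"
  using assms unfolding swap_coords_def Gp_carrier_iff by auto

lemma swap_coords_involution: "swap_coords a b b' (swap_coords a b b' x) = x"
  unfolding swap_coords_def by (intro ext) auto

lemma swap_coords_iso:
  assumes "a < n" "b < k a" "b' < k a"
  shows "swap_coords a b b' \<in> iso (Gp p r k n) (Gp p r k n)"
proof (rule iso_by_inverse[where g = "swap_coords a b b'"])
  fix x y
  show "swap_coords a b b' (x \<otimes>\<^bsub>Gp p r k n\<^esub> y) =
      swap_coords a b b' x \<otimes>\<^bsub>Gp p r k n\<^esub> swap_coords a b b' y"
    unfolding Gp_simps swap_coords_def by (intro ext) auto
qed (use swap_coords_carrier[where k = k and p = p and r = r, OF assms] swap_coords_involution
    in auto)

section \<open>Existence of representatives\<close>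

lemma unit_multiple_prime_power:
  fixes p m R :: nat
  assumes p: "prime p" and m: "0 < m" "m < p ^ R"
  shows "\<exists>w s. coprime w p \<and> (w * m) mod p ^ R = p ^ s"
proof -
  have "m \<noteq> 0" "\<not> is_unit p" using m p by auto
  then obtain s u where u: "m = p ^ s * u" "\<not> p dvd u"
    using multiplicity_decompose' by metis
  have "coprime u (p ^ R)"
    using prime_imp_coprime[OF p u(2)] by (simp add: coprime_commute)
  then obtain w where w: "[u * w = 1] (mod p ^ R)"
    using cong_solve_coprime_nat[of u "p ^ R"] by auto
  have "R > 0" using m by (cases R) auto
  moreover have "[w * u = 1] (mod p ^ R)" using w by (simp only: mult.commute)
  then have "coprime w (p ^ R)"
    using coprime_iff_invertible_nat[of w "p ^ R"] by auto
  ultimately have unit: "coprime w p" by simp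
  have "(w * m) mod p ^ R = (p ^ s * (u * w)) mod p ^ R"
    by (simp add: u(1) ac_simps)
  also have "\<dots> = p ^ s mod p ^ R"
    using w unfolding cong_def by (metis mod_mult_right_eq mult_1_right)
  also have "\<dots> = p ^ s"
  proof -
    have "p ^ s \<le> m" using u m(1) by (metis dvd_imp_le dvd_triv_left)
    then show ?thesis using m(2) by simp
  qed
  finally show ?thesis using unit by blast
qed

definition support :: "(nat \<Rightarrow> nat) \<Rightarrow> nat \<Rightarrow> (nat \<Rightarrow> nat \<Rightarrow> nat) \<Rightarrow> (nat \<times> nat) set" where
  "support k n x = {(i, j). i < n \<and> j < k i \<and> x i j \<noteq> 0}"

lemma in_support [simp]: "(i, j) \<in> support k n x \<longleftrightarrow> i < n \<and> j < k i \<and> x i j \<noteq> 0"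
  by (simp add: support_def)

lemma finite_support: "finite (support k n x)"
  by (rule finite_subset[of _ "Sigma {..<n} (\<lambda>i. {..<k i})"]) (auto simp: support_def)

lemma normalize_coords:
  assumes p: "prime p" and x: "x \<in> Gp_carrier p r k n"
  shows "\<exists>y. aut_equiv p r k n x y \<and> y \<in> Gp_carrier p r k n \<and> support k n y = support k n x \<and>
            (\<forall>i j. y i j \<noteq> 0 \<longrightarrow> (\<exists>s. y i j = p ^ s))"
proof -
  let ?good = "\<lambda>i j w. coprime w p \<and> (x i j \<noteq> 0 \<longrightarrow> (\<exists>s. (w * x i j) mod p ^ r i = p ^ s))"
  define w where "w i j = (SOME w. ?good i j w)" for i j
  have "\<exists>w. ?good i j w" for i j
  proof (cases "x i j = 0")
    case False
    then show ?thesis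
      using unit_multiple_prime_power[OF p] Gp_carrier_nonzero[OF x] by (meson not_gr0)
  qed (auto intro: exI[of _ 1])
  then have w: "?good i j (w i j)" for i j
    unfolding w_def by (rule someI_ex)
  let ?y = "scale p r w x"
  have y_pow: "x i j \<noteq> 0 \<Longrightarrow> \<exists>s. ?y i j = p ^ s" for i j
    using w unfolding scale_def by blast
  have y_zero: "x i j = 0 \<Longrightarrow> ?y i j = 0" for i j
    unfolding scale_def by simp
  have "?y i j \<noteq> 0 \<longleftrightarrow> x i j \<noteq> 0" for i j
    using y_pow y_zero p by (metis not_prime_0 power_eq_0_iff)
  then have "support k n ?y = support k n x" unfolding support_def by auto
  moreover have "aut_equiv p r k n x ?y"
    by (rule aut_equivI[OF scale_iso[OF p]]) (use w in blast)
  ultimately show ?thesis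
    using scale_carrier[OF p x] y_pow y_zero by metis
qed

text \<open>The termination measure of the reduction: it decreases when a position is removed
  from the support and when a position off the first column moves to the first column.\<close>
definition support_measure :: "(nat \<times> nat) set \<Rightarrow> nat" where
  "support_measure S = 2 * card S + card {ij \<in> S. 0 < snd ij}"

lemma support_measure_remove:
  assumes "finite S" "a \<in> S"
  shows "support_measure (S - {a}) < support_measure S"
proof -
  have "card {ij \<in> S - {a}. 0 < snd ij} \<le> card {ij \<in> S. 0 < snd ij}"
    by (rule card_mono) (use assms(1) in auto)
  moreover have "card (S - {a}) < card S" using assms by (rule card_Diff1_less)
  ultimately show ?thesis unfolding support_measure_def by linarith
qed

lemma support_measure_move_to_column0:
  assumes fin: "finite S" and ij: "(i, j) \<in> S" "0 < j" and i0: "(i, 0) \<notin> S"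
  shows "support_measure (insert (i, 0) (S - {(i, j)})) < support_measure S"
proof -
  have "card (insert (i, 0) (S - {(i, j)})) = Suc (card (S - {(i, j)}))"
    using fin i0 by simp
  also have "\<dots> = card S" using card.remove[OF fin ij(1)] by simp
  finally have "card (insert (i, 0) (S - {(i, j)})) = card S" .
  moreover have "card {ab \<in> insert (i, 0) (S - {(i, j)}). 0 < snd ab} =
      card ({ab \<in> S. 0 < snd ab} - {(i, j)})"
    by (rule arg_cong[where f = card]) auto
  moreover have "card ({ab \<in> S. 0 < snd ab} - {(i, j)}) < card {ab \<in> S. 0 < snd ab}"
    using fin ij by (intro card_Diff1_less) auto
  ultimately show ?thesis unfolding support_measure_def by linarith
qed

text \<open>Coordinate \<open>ab = p^v'\<close> dominates coordinate \<open>ab' = p^v\<close> if \<open>v' \<le> v\<close> and the order of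
  \<open>p^v\<close> is at most that of \<open>p^v'\<close>; then a transvection can clear coordinate \<open>ab'\<close>.\<close>
definition dominates :: "nat \<Rightarrow> (nat \<Rightarrow> nat) \<Rightarrow> (nat \<Rightarrow> nat \<Rightarrow> nat) \<Rightarrow> nat \<times> nat \<Rightarrow> nat \<times> nat \<Rightarrow> bool" where
  "dominates p r x ab ab' \<longleftrightarrow> (\<exists>v v'. x (fst ab) (snd ab) = p ^ v' \<and> x (fst ab') (snd ab') = p ^ v \<and>
       v' \<le> v \<and> r (fst ab') + v' \<le> r (fst ab) + v)"

lemma dominatesI:
  "x a b = p ^ v' \<Longrightarrow> x a' b' = p ^ v \<Longrightarrow> v' \<le> v \<Longrightarrow> r a' + v' \<le> r a + v \<Longrightarrow>
   dominates p r x (a, b) (a', b')"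
  unfolding dominates_def by auto

lemma same_factor_dominates:
  assumes "x i j = p ^ v" "x i j' = p ^ v'"
  shows "dominates p r x (i, j) (i, j') \<or> dominates p r x (i, j') (i, j)"
proof (cases "v' \<le> v")
  case True
  then show ?thesis using dominatesI[of x i j' p v' i j v r] assms by simp
next
  case False
  then show ?thesis using dominatesI[of x i j p v i j' v' r] assms by simp
qed

lemma transvection_step:
  assumes p: "prime p" and x: "x \<in> Gp_carrier p r k n"
    and ij: "(i, j) \<in> support k n x" and ne: "(i', j') \<noteq> (i, j)"
    and dom: "dominates p r x (i', j') (i, j)"
  shows "\<exists>y \<in> Gp_carrier p r k n. aut_equiv p r k n x y \<and> support k n y = support k n x - {(i, j)}"
proof -
  obtain v v' where v: "x i j = p ^ v" "x i' j' = p ^ v'" "v' \<le> v" "r i + v' \<le> r i' + v"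
    using dom unfolding dominates_def by auto
  define c where "c = (p ^ r i - 1) * p ^ (v - v')"
  have "p ^ r i dvd p ^ (v - v' + r i')" by (rule le_imp_power_dvd) (use v in linarith)
  then have dvd: "p ^ r i dvd c * p ^ r i'"
    unfolding c_def by (simp add: power_add mult.assoc)
  let ?y = "transvection p r i j i' j' c x"
  have "c * p ^ v' = (p ^ r i - 1) * p ^ v" unfolding c_def using v(3)
    by (simp add: mult.assoc flip: power_add)
  moreover have "p ^ v + (p ^ r i - 1) * p ^ v = p ^ r i * p ^ v"
    using p by (metis Suc_diff_1 mult_Suc prime_gt_0_nat zero_less_power)
  ultimately have "?y i j = 0" unfolding transvection_def using v by simp
  then have "support k n ?y = support k n x - {(i, j)}"
    unfolding support_def transvection_def by auto
  moreover have bounds: "i < n" "j < k i" using ij by auto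
  then have "?y \<in> Gp_carrier p r k n" by (rule transvection_carrier[OF p _ _ x])
  moreover have "aut_equiv p r k n x ?y"
    using ne by (intro aut_equivI transvection_iso[where k = k and n = n, OF p _ bounds dvd]) auto
  ultimately show ?thesis by blast
qed

lemma swap_step:
  assumes x: "x \<in> Gp_carrier p r k n"
    and ij: "(i, j) \<in> support k n x" "0 < j" and i0: "x i 0 = 0"
  shows "\<exists>y \<in> Gp_carrier p r k n. aut_equiv p r k n x y \<and>
           support k n y = insert (i, 0) (support k n x - {(i, j)})"
proof -
  have bounds: "i < n" "0 < k i" "j < k i" using ij by auto
  let ?y = "swap_coords i 0 j x"
  have "support k n ?y = insert (i, 0) (support k n x - {(i, j)})"
    using ij i0 bounds unfolding support_def swap_coords_def by auto
  moreover have "?y \<in> Gp_carrier p r k n" by (rule swap_coords_carrier[OF bounds x])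
  moreover have "aut_equiv p r k n x ?y"
    by (rule aut_equivI[OF swap_coords_iso[where p = p and r = r and k = k and n = n, OF bounds]])
  ultimately show ?thesis by blast
qed

text \<open>An element with \<open>p\<close>-power coordinates, all in first copies, none dominating another,
  is a representative: for \<open>i < j\<close> non-domination in both directions, together with
  \<open>r_i < r_j\<close>, forces both the exponents and the orders to increase.\<close>
lemma reduced_is_representative:
  assumes p: "prime p" and incr: "\<And>i j. i < j \<Longrightarrow> j < n \<Longrightarrow> r i < r j"
    and x: "x \<in> Gp_carrier p r k n"
    and pow: "\<And>i j. x i j \<noteq> 0 \<Longrightarrow> \<exists>s. x i j = p ^ s"
    and undominated: "\<And>a b. a \<in> support k n x \<Longrightarrow> b \<in> support k n x \<Longrightarrow> a \<noteq> b \<Longrightarrow>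
        \<not> dominates p r x a b"
    and column0: "\<And>i j. (i, j) \<in> support k n x \<Longrightarrow> j = 0"
  shows "is_representative p r k n x"
  unfolding is_representative_def
proof (intro conjI allI impI)
  have p1: "p > 1" using p prime_gt_1_nat by blast
  show "x \<in> Gp_carrier p r k n" by (rule x)
  show "x i j = 0" if "0 < j" for i j
  proof (rule ccontr)
    assume "x i j \<noteq> 0"
    then have "(i, j) \<in> support k n x" using Gp_carrier_nonzero[OF x] by simp
    then show False using column0 that by blast
  qed
  show "x i 0 = 0 \<or> (\<exists>s < r i. x i 0 = p ^ s)" for i
  proof (cases "x i 0 = 0")
    case False
    then obtain s where "x i 0 = p ^ s" using pow by blast
    then show ?thesis using Gp_carrier_prime_power[OF p x] by blast
  qed simp
  fix i j assume ij: "i < j \<and> j < n \<and> x i 0 \<noteq> 0 \<and> x j 0 \<noteq> 0"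
  obtain s t where s: "x i 0 = p ^ s" and t: "x j 0 = p ^ t" using pow ij by blast
  have sr: "s < r i" and tr: "t < r j" using Gp_carrier_prime_power[OF p x] s t by blast+
  have "(i, 0) \<in> support k n x" "(j, 0) \<in> support k n x" "(i, 0) \<noteq> (j, 0)"
    using ij Gp_carrier_nonzero[OF x] by auto
  then have "\<not> dominates p r x (j, 0) (i, 0)" "\<not> dominates p r x (i, 0) (j, 0)"
    using undominated by blast+
  then have "\<not> (t \<le> s \<and> r i + t \<le> r j + s)" "\<not> (s \<le> t \<and> r j + s \<le> r i + t)"
    using dominatesI[of x j 0 p t i 0 s r] dominatesI[of x i 0 p s j 0 t r] s t by blast+
  moreover have "r i < r j" using incr ij by blast
  ultimately have "s < t" "r i - s < r j - t" using sr tr by linarith+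
  then show "x i 0 < x j 0"
    and "cyc_order (p ^ r i) (x i 0) < cyc_order (p ^ r j) (x j 0)"
    using s t p1 cyc_order_prime_power[OF p] sr tr by simp_all
qed

lemma reduction_step:
  assumes p: "prime p" and incr: "\<And>i j. i < j \<Longrightarrow> j < n \<Longrightarrow> r i < r j"
    and x: "x \<in> Gp_carrier p r k n"
    and pow: "\<And>i j. x i j \<noteq> 0 \<Longrightarrow> \<exists>s. x i j = p ^ s"
  shows "is_representative p r k n x \<or>
    (\<exists>y \<in> Gp_carrier p r k n. aut_equiv p r k n x y \<and>
       support_measure (support k n y) < support_measure (support k n x))"
proof (cases "\<exists>a \<in> support k n x. \<exists>b \<in> support k n x. b \<noteq> a \<and> dominates p r x b a")
  case True
  then obtain a b where "a \<in> support k n x" "b \<noteq> a" "dominates p r x b a" by blast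
  moreover obtain i j i' j' where "a = (i, j)" "b = (i', j')" by fastforce
  ultimately have "(i, j) \<in> support k n x" "(i', j') \<noteq> (i, j)" "dominates p r x (i', j') (i, j)"
    by simp_all
  then obtain y where "y \<in> Gp_carrier p r k n" "aut_equiv p r k n x y"
      "support k n y = support k n x - {(i, j)}"
    using transvection_step[OF p x] by blast
  then show ?thesis
    using support_measure_remove[OF finite_support \<open>(i, j) \<in> support k n x\<close>] by auto
next
  case False
  then have undominated: "\<And>a b. a \<in> support k n x \<Longrightarrow> b \<in> support k n x \<Longrightarrow> a \<noteq> b \<Longrightarrow>
      \<not> dominates p r x a b" by blast
  show ?thesis
  proof (cases "\<exists>i j. (i, j) \<in> support k n x \<and> 0 < j")
    case True
    then obtain i j where ij: "(i, j) \<in> support k n x" "0 < j" by blast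
    have "x i 0 = 0"
    proof (rule ccontr)
      assume "x i 0 \<noteq> 0"
      then have "(i, 0) \<in> support k n x" using ij by auto
      moreover obtain v v' where "x i j = p ^ v" "x i 0 = p ^ v'"
        using pow ij \<open>x i 0 \<noteq> 0\<close> by (meson in_support)
      ultimately show False
        using same_factor_dominates undominated ij by (metis less_not_refl prod.inject)
    qed
    then show ?thesis
      using swap_step[OF x ij] support_measure_move_to_column0[OF finite_support ij] by auto
  next
    case False
    then have "j = 0" if "(i, j) \<in> support k n x" for i j
      using that by (metis neq0_conv)
    then have "is_representative p r k n x"
      using reduced_is_representative[of p n r x k] p incr x pow undominated by blast
    then show ?thesis ..
  qed
qed

theorem exists_representative:
  assumes p: "prime p" and incr: "\<And>i j. i < j \<Longrightarrow> j < n \<Longrightarrow> r i < r j"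
    and x: "x \<in> Gp_carrier p r k n"
  shows "\<exists>g. is_representative p r k n g \<and> aut_equiv p r k n x g"
  using x
proof (induction "support_measure (support k n x)" arbitrary: x rule: less_induct)
  case (less x)
  obtain y where y: "aut_equiv p r k n x y" "y \<in> Gp_carrier p r k n"
      "support k n y = support k n x" "\<forall>i j. y i j \<noteq> 0 \<longrightarrow> (\<exists>s. y i j = p ^ s)"
    using normalize_coords[OF p less.prems] by blast
  have "is_representative p r k n y \<or>
      (\<exists>z \<in> Gp_carrier p r k n. aut_equiv p r k n y z \<and>
         support_measure (support k n z) < support_measure (support k n y))"
    using reduction_step[of p n r y k] p incr y(2,4) by blast
  then show ?case
  proof (elim disjE bexE conjE)
    assume "is_representative p r k n y"
    then show ?case using y(1) by blast
  next
    fix z assume "z \<in> Gp_carrier p r k n" "aut_equiv p r k n y z"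
      "support_measure (support k n z) < support_measure (support k n y)"
    then show ?case using less.hyps y(1,3) aut_equiv_trans by metis
  qed
qed

theorem mainTheorem5:
  fixes p n :: nat and r k :: "nat \<Rightarrow> nat"
  assumes "prime p"
    and "\<And>i j. i < j \<Longrightarrow> j < n \<Longrightarrow> r i < r j"
    and "\<And>i. i < n \<Longrightarrow> 1 \<le> k i"
  shows "(\<forall>g h. is_representative p r k n g \<and> is_representative p r k n h \<and>
                 aut_equiv p r k n g h \<longrightarrow> g = h) \<and>
         (\<forall>x \<in> carrier (Gp p r k n).
                 \<exists>!g. is_representative p r k n g \<and> aut_equiv p r k n x g)"
proof (intro conjI allI impI ballI)
  fix g h
  assume "is_representative p r k n g \<and> is_representative p r k n h \<and> aut_equiv p r k n g h"
  then show "g = h" using rep_unique[of p n r k g h] assms(1,2) by blast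
next
  fix x assume "x \<in> carrier (Gp p r k n)"
  then have x: "x \<in> Gp_carrier p r k n" by simp
  obtain g where g: "is_representative p r k n g" "aut_equiv p r k n x g"
    using exists_representative[of p n r x k] assms(1,2) x by blast
  moreover have "g' = g" if "is_representative p r k n g'" "aut_equiv p r k n x g'" for g'
    using rep_unique[of p n r k g g'] assms(1,2) g(1) that
      aut_equiv_trans[OF aut_equiv_sym[OF assms(1) g(2) x]] by blast
  ultimately show "\<exists>!g. is_representative p r k n g \<and> aut_equiv p r k n x g" by blast
qed

end
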